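(* Let $a\colon\mathcal{D}(X)\to X$ be a convex set (an algebra of the distribution monad) and let $b\colon X\to\mathcal{D}(X)$ be a $\overline{\mathcal{D}}$-coalgebra on it. Then $\{x\in X\mid b(x)=1x\}=\partial X$, the set of extreme points of $X$.
   Context: The distribution monad $\mathcal{D}$ on $\mathbf{Sets}$ has $\mathcal{D}(X)=\{\varphi\colon X\to[0,1]\mid\mathrm{supp}(\varphi)\text{ finite},\ \sum_x\varphi(x)=1\}$, written as formal convex sums $\sum_i r_ix_i$, with unit $\eta(x)=1x$ and multiplication $\mu(\sum_i r_i\varphi_i)(x)=\sum_i r_i\varphi_i(x)$. Its Eilenberg–Moore algebras $a\colon\mathcal{D}(X)\to X$ are convex sets (interpreting formal convex sums as actual ones), and homomorphisms are affine maps. The induced comonad $\overline{\mathcal{D}}$ on convex sets sends $X$ to the free convex set $\mathcal{D}(X)$ with counit $a$ and comultiplication $\mathcal{D}(\eta_X)$; a $\overline{\mathcal{D}}$-coalgebra is an affine map $b\colon X\to\mathcal{D}(X)$ with $a\circ b=\mathrm{id}$ and $\mathcal{D}(\eta_X)\circ b=\mathcal{D}(b)\circ b$. A point $x\in X$ is extreme if whenever $x=\sum_i r_ix_i$ (convex sum in $X$) there is $j$ with $r_j=1$ and $x_j=x$. *)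

theory Defs
  imports Main "HOL-Library.Indicator_Function"
begin

definition supp :: "('a \<Rightarrow> real) \<Rightarrow> 'a set" where
  "supp \<phi> = {x. \<phi> x \<noteq> 0}"

definition Dist :: "'a set \<Rightarrow> ('a \<Rightarrow> real) set" where
  "Dist X = {\<phi>. (\<forall>x. 0 \<le> \<phi> x) \<and> finite (supp \<phi>) \<and> supp \<phi> \<subseteq> X
                 \<and> sum \<phi> (supp \<phi>) = 1}"

text \<open>Unit: eta x = 1x.\<close>
definition eta :: "'a \<Rightarrow> ('a \<Rightarrow> real)" where
  "eta x = (\<lambda>y. if y = x then 1 else 0)"

definition Dmap :: "('a \<Rightarrow> 'b) \<Rightarrow> ('a \<Rightarrow> real) \<Rightarrow> ('b \<Rightarrow> real)" where
  "Dmap f \<phi> = (\<lambda>y. sum \<phi> {x \<in> supp \<phi>. f x = y})"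

definition mu :: "(('a \<Rightarrow> real) \<Rightarrow> real) \<Rightarrow> ('a \<Rightarrow> real)" where
  "mu \<Phi> = (\<lambda>x. \<Sum>\<phi>\<in>supp \<Phi>. \<Phi> \<phi> * \<phi> x)"

definition D_algebra :: "'a set \<Rightarrow> (('a \<Rightarrow> real) \<Rightarrow> 'a) \<Rightarrow> bool" where
  "D_algebra X a \<longleftrightarrow>
     (\<forall>\<phi>\<in>Dist X. a \<phi> \<in> X) \<and>
     (\<forall>x\<in>X. a (eta x) = x) \<and>
     (\<forall>\<Phi>\<in>Dist (Dist X). a (mu \<Phi>) = a (Dmap a \<Phi>))"

text \<open>Coalgebra of the induced comonad on convex sets: an affine map
  b : X \<rightarrow> D(X) (algebra homomorphism (X,a) \<rightarrow> (D X, mu)) with a \<circ> b = id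
  and D(eta) \<circ> b = D(b) \<circ> b.\<close>
definition D_coalgebra :: "'a set \<Rightarrow> (('a \<Rightarrow> real) \<Rightarrow> 'a) \<Rightarrow> ('a \<Rightarrow> ('a \<Rightarrow> real)) \<Rightarrow> bool" where
  "D_coalgebra X a b \<longleftrightarrow>
     (\<forall>x\<in>X. b x \<in> Dist X) \<and>
     (\<forall>\<phi>\<in>Dist X. b (a \<phi>) = mu (Dmap b \<phi>)) \<and>
     (\<forall>x\<in>X. a (b x) = x) \<and>
     (\<forall>x\<in>X. Dmap eta (b x) = Dmap b (b x))"

text \<open>Extreme point: whenever x = \<Sum>i r_i x_i (a formal convex sum \<phi>
  with a \<phi> = x) there is j with r_j = 1 and x_j = x.\<close>
definition extreme :: "'a set \<Rightarrow> (('a \<Rightarrow> real) \<Rightarrow> 'a) \<Rightarrow> 'a \<Rightarrow> bool" where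
  "extreme X a x \<longleftrightarrow> x \<in> X \<and>
     (\<forall>\<phi>\<in>Dist X. a \<phi> = x \<longrightarrow> (\<exists>j. \<phi> j = 1 \<and> j = x))"

end

theory Submission
  imports Defs
begin

text \<open>A coalgebra map \<open>b\<close> is affine and a section of \<open>a\<close>. If \<open>b x = 1x\<close> and
  \<open>x = \<Sum>\<^sub>i r\<^sub>i x\<^sub>i\<close>, then \<open>1x = b x = \<Sum>\<^sub>i r\<^sub>i b(x\<^sub>i)\<close> in \<open>D(X)\<close>; point masses are extreme
  in the free convex set, so every \<open>b(x\<^sub>i) = 1x\<close> and \<open>x\<^sub>i = a(b(x\<^sub>i)) = a(1x) = x\<close>.
  Conversely, an extreme point \<open>x\<close> is the barycentre \<open>a(b x)\<close> of \<open>b x\<close>, which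
  forces \<open>b x = 1x\<close>.\<close>

lemma Dist_eq_etaI:
  assumes "\<psi> \<in> Dist X" "supp \<psi> \<subseteq> {x}"
  shows "\<psi> = eta x"
proof -
  have "supp \<psi> = {} \<or> supp \<psi> = {x}" using assms(2) by (rule subset_singletonD)
  then have "supp \<psi> = {x}" using assms(1) by (auto simp: Dist_def)
  then show ?thesis using assms(1) by (auto simp: Dist_def supp_def eta_def fun_eq_iff)
qed

lemma Dist_eq_eta_if_mass_one:
  assumes "\<psi> \<in> Dist X" "\<psi> x = 1"
  shows "\<psi> = eta x"
proof (rule Dist_eq_etaI[OF assms(1)])
  have nonneg: "\<forall>y. 0 \<le> \<psi> y" and fin: "finite (supp \<psi>)" and total: "sum \<psi> (supp \<psi>) = 1"
    using assms(1) by (auto simp: Dist_def)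
  have "x \<in> supp \<psi>" using assms(2) by (simp add: supp_def)
  then have "sum \<psi> (supp \<psi> - {x}) = 0"
    using fin total assms(2) by (simp add: sum.remove)
  then have "\<forall>y\<in>supp \<psi> - {x}. \<psi> y = 0"
    using fin nonneg by (simp add: sum_nonneg_eq_0_iff)
  then show "supp \<psi> \<subseteq> {x}" by (auto simp: supp_def)
qed

lemma supp_Dmap:
  assumes "\<phi> \<in> Dist X"
  shows "supp (Dmap f \<phi>) = f ` supp \<phi>"
proof (intro equalityI subsetI)
  fix \<psi> assume "\<psi> \<in> supp (Dmap f \<phi>)"
  then have "sum \<phi> {z \<in> supp \<phi>. f z = \<psi>} \<noteq> 0" by (simp add: Dmap_def supp_def)
  then have "{z \<in> supp \<phi>. f z = \<psi>} \<noteq> {}" by (metis sum.empty)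
  then show "\<psi> \<in> f ` supp \<phi>" by auto
next
  fix \<psi> assume "\<psi> \<in> f ` supp \<phi>"
  then obtain z where z: "z \<in> supp \<phi>" and \<psi>: "\<psi> = f z" by blast
  have nonneg: "\<forall>y. 0 \<le> \<phi> y" and fin: "finite (supp \<phi>)" using assms by (auto simp: Dist_def)
  have "0 < \<phi> z" using z nonneg by (simp add: supp_def order_less_le)
  also have "\<phi> z \<le> sum \<phi> {w \<in> supp \<phi>. f w = f z}"
    using z fin nonneg by (intro member_le_sum) auto
  finally show "\<psi> \<in> supp (Dmap f \<phi>)" by (simp add: \<psi> Dmap_def supp_def)
qed

lemma Dmap_in_Dist:
  assumes "\<phi> \<in> Dist X" "f ` X \<subseteq> Y"
  shows "Dmap f \<phi> \<in> Dist Y"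
proof -
  have nonneg: "\<forall>y. 0 \<le> \<phi> y" and fin: "finite (supp \<phi>)" and "supp \<phi> \<subseteq> X"
    and total: "sum \<phi> (supp \<phi>) = 1" using assms(1) by (auto simp: Dist_def)
  have "sum (Dmap f \<phi>) (supp (Dmap f \<phi>)) = sum (Dmap f \<phi>) (f ` supp \<phi>)"
    by (simp only: supp_Dmap[OF assms(1)])
  also have "\<dots> = 1"
    using sum.image_gen[OF fin, of \<phi> f] total by (simp add: Dmap_def)
  finally have "sum (Dmap f \<phi>) (supp (Dmap f \<phi>)) = 1" .
  moreover have "supp (Dmap f \<phi>) \<subseteq> Y"
    unfolding supp_Dmap[OF assms(1)] using \<open>supp \<phi> \<subseteq> X\<close> assms(2) by blast
  moreover have "finite (supp (Dmap f \<phi>))" unfolding supp_Dmap[OF assms(1)] using fin by simp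
  moreover have "0 \<le> Dmap f \<phi> \<psi>" for \<psi> using nonneg by (simp add: Dmap_def sum_nonneg)
  ultimately show ?thesis unfolding Dist_def by blast
qed

lemma mu_eq_eta_imp_supp_eta:
  assumes "\<Phi> \<in> Dist (Dist X)" "mu \<Phi> = eta x" "\<psi> \<in> supp \<Phi>"
  shows "\<psi> = eta x"
proof (rule Dist_eq_etaI)
  have nonneg: "\<forall>\<chi>. 0 \<le> \<Phi> \<chi>" and fin: "finite (supp \<Phi>)" and dists: "supp \<Phi> \<subseteq> Dist X"
    using assms(1) by (auto simp: Dist_def)
  show \<psi>: "\<psi> \<in> Dist X" using assms(3) dists by blast
  have "0 < \<Phi> \<psi>" using assms(3) nonneg by (simp add: supp_def order_less_le)
  have "\<psi> y = 0" if "y \<noteq> x" for y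
  proof -
    have "(\<Sum>\<chi>\<in>supp \<Phi>. \<Phi> \<chi> * \<chi> y) = 0"
      using assms(2) that by (simp add: mu_def eta_def fun_eq_iff)
    moreover have "\<forall>\<chi>\<in>supp \<Phi>. 0 \<le> \<Phi> \<chi> * \<chi> y"
      using dists nonneg by (auto simp: Dist_def)
    ultimately have "\<Phi> \<psi> * \<psi> y = 0" using fin assms(3) by (simp add: sum_nonneg_eq_0_iff)
    then show ?thesis using \<open>0 < \<Phi> \<psi>\<close> by simp
  qed
  then show "supp \<psi> \<subseteq> {x}" by (auto simp: supp_def)
qed

lemma extreme_imp_coalgebra_eta:
  assumes "D_coalgebra X a b" "extreme X a x"
  shows "b x = eta x"
proof -
  have "x \<in> X" using assms(2) by (simp add: extreme_def)
  then have "b x \<in> Dist X" "a (b x) = x" using assms(1) by (auto simp: D_coalgebra_def)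
  then have "b x x = 1" using assms(2) by (auto simp: extreme_def)
  then show ?thesis using \<open>b x \<in> Dist X\<close> by (rule Dist_eq_eta_if_mass_one[rotated])
qed

lemma coalgebra_eta_imp_extreme:
  assumes "D_algebra X a" "D_coalgebra X a b" "x \<in> X" "b x = eta x"
  shows "extreme X a x"
  unfolding extreme_def
proof (intro conjI ballI impI assms(3))
  fix \<phi> assume \<phi>: "\<phi> \<in> Dist X" and "a \<phi> = x"
  have b_Dist: "b ` X \<subseteq> Dist X" and b_affine: "b (a \<phi>) = mu (Dmap b \<phi>)"
    and a_b: "\<forall>z\<in>X. a (b z) = z"
    using assms(2) \<phi> unfolding D_coalgebra_def by (blast, blast, blast)
  have a_eta: "a (eta x) = x" using assms(1,3) unfolding D_algebra_def by blast
  have "Dmap b \<phi> \<in> Dist (Dist X)" using \<phi> b_Dist by (rule Dmap_in_Dist)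
  moreover have "mu (Dmap b \<phi>) = eta x" using b_affine \<open>a \<phi> = x\<close> assms(4) by simp
  ultimately have b_supp: "b z = eta x" if "z \<in> supp \<phi>" for z
    by (rule mu_eq_eta_imp_supp_eta) (use that supp_Dmap[OF \<phi>, of b] in blast)
  have "z = x" if "z \<in> supp \<phi>" for z
  proof -
    have "z \<in> X" using that \<phi> by (auto simp: Dist_def)
    then have "z = a (b z)" using a_b by simp
    also have "\<dots> = x" using b_supp[OF that] a_eta by simp
    finally show ?thesis .
  qed
  then have "\<phi> = eta x" using \<phi> by (intro Dist_eq_etaI) auto
  then show "\<exists>j. \<phi> j = 1 \<and> j = x" by (simp add: eta_def)
qed

theorem mainTheorem5:
  fixes X :: "'a set" and a :: "('a \<Rightarrow> real) \<Rightarrow> 'a" and b :: "'a \<Rightarrow> ('a \<Rightarrow> real)"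
  assumes "D_algebra X a"
    and "D_coalgebra X a b"
  shows "{x \<in> X. b x = eta x} = {x. extreme X a x}"
  using coalgebra_eta_imp_extreme[OF assms] extreme_imp_coalgebra_eta[OF assms(2)]
  by (auto simp: extreme_def)

end
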